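(* Let $A,B\in\mathfrak{J}_n$ be nonempty and let $h(x)=\mu\big(xA\,\widetilde\oplus\,(1-x)B\big)$ for $x\in\mathbb{R}$. If $A,B$ satisfy the zero-measure condition, then $h$ is continuous on all of $\mathbb{R}$. Otherwise $h$ is continuous at every $x\neq\frac12$.
   Context: $\mu$ is $n$-dimensional Lebesgue measure. $\operatorname{ci}(A)$ is the closure of the interior of $A$. $\mathfrak{J}_n$ is the family of bounded sets $A\subset\mathbb{R}^n$ with $A=\operatorname{ci}(A)$ and $\mu(\partial A)=0$. For nonempty bounded $A$, $d_S(p,A)=d(p,\partial A)$ if $p\in A$ and $d_S(p,A)=-d(p,\partial A)$ if $p\notin A$, with $d(q,E)=\min_{e\in E}\|q-e\|$. For nonempty $A,B\in\mathfrak{J}_n$, $x\in\mathbb{R}$: $f_{A,B,x}(p)=x\,d_S(p,A)+(1-x)\,d_S(p,B)$, the distance average is $xA\,\widetilde\oplus\,(1-x)B=\{p: f_{A,B,x}(p)\ge0\}$, and $\Omega_{A,B,x}=\{p: f_{A,B,x}(p)=0\}$. The sets $A,B$ satisfy the zero-measure condition if $\mu(\Omega_{A,B,1/2})=0$. *)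

theory Defs
  imports "HOL-Analysis.Analysis"
begin

definition J_class :: "'a::euclidean_space set \<Rightarrow> bool" where
  "J_class A \<longleftrightarrow> bounded A \<and> A = closure (interior A) \<and> measure lebesgue (frontier A) = 0"

text \<open>Signed distance to the boundary (d(q,E) = min distance, realised by infdist;
  the boundary is compact and nonempty for the sets considered).\<close>
definition signed_dist :: "'a::euclidean_space \<Rightarrow> 'a set \<Rightarrow> real" where
  "signed_dist p A = (if p \<in> A then infdist p (frontier A) else - infdist p (frontier A))"

definition f_avg :: "'a::euclidean_space set \<Rightarrow> 'a set \<Rightarrow> real \<Rightarrow> 'a \<Rightarrow> real" where
  "f_avg A B x p = x * signed_dist p A + (1 - x) * signed_dist p B"

definition dist_average :: "'a::euclidean_space set \<Rightarrow> 'a set \<Rightarrow> real \<Rightarrow> 'a set" where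
  "dist_average A B x = {p. f_avg A B x p \<ge> 0}"

definition Omega_set :: "'a::euclidean_space set \<Rightarrow> 'a set \<Rightarrow> real \<Rightarrow> 'a set" where
  "Omega_set A B x = {p. f_avg A B x p = 0}"

definition zero_measure_cond :: "'a::euclidean_space set \<Rightarrow> 'a set \<Rightarrow> bool" where
  "zero_measure_cond A B \<longleftrightarrow> measure lebesgue (Omega_set A B (1/2)) = 0"

end

theory Submission
  imports Defs
begin

text \<open>Write \<open>f\<^sub>x\<close> for \<open>f_avg A B x\<close>. On a fixed compact set \<open>f\<^sub>x - f\<^sub>x\<^sub>0 =
  (x - x\<^sub>0) (d\<^sub>S(-, A) - d\<^sub>S(-, B))\<close> is \<open>O(\<bar>x - x\<^sub>0\<bar>)\<close>, so the distance averages for \<open>x\<close>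
  near \<open>x\<^sub>0\<close> differ only inside a band \<open>{\<bar>f\<^sub>x\<^sub>0\<bar> \<le> \<epsilon>}\<close> shrinking to \<open>\<Omega>\<^sub>x\<^sub>0\<close>: thus
  \<open>h\<close> is continuous wherever \<open>\<Omega>\<^sub>x\<close> is null. For \<open>x \<noteq> 1/2\<close> one weight dominates, and
  \<open>\<Omega>\<^sub>x\<close> minus the boundary of the dominating set is porous, hence null by the Vitali
  covering theorem; that boundary is null because the sets lie in \<open>J\<^sub>n\<close>.\<close>

section \<open>Signed distance\<close>

lemma abs_signed_dist_diff_le:
  fixes A :: "'a::euclidean_space set"
  shows "\<bar>signed_dist y A - signed_dist z A\<bar> \<le> dist y z"
proof (cases "y \<in> A \<longleftrightarrow> z \<in> A")
  case True
  then show ?thesis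
    using infdist_triangle_abs[of y "frontier A" z] by (auto simp: signed_dist_def)
next
  case False
  then have "closed_segment y z \<inter> frontier A \<noteq> {}"
    by (intro connected_Int_frontier) auto
  then obtain w where w: "w \<in> closed_segment y z" "w \<in> frontier A" by blast
  have "dist y z = dist y w + dist w z"
    using w(1) by (simp add: between between_mem_segment[symmetric])
  moreover have "infdist y (frontier A) \<le> dist y w" "infdist z (frontier A) \<le> dist z w"
    using w(2) by (auto intro: infdist_le)
  moreover have "0 \<le> infdist y (frontier A)" "0 \<le> infdist z (frontier A)"
    by (auto intro: infdist_nonneg)
  ultimately show ?thesis
    using False by (auto simp: signed_dist_def dist_commute)
qed

lemma continuous_on_signed_dist: "continuous_on UNIV (\<lambda>p. signed_dist p A)"
  unfolding continuous_on_iff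
  by (metis dist_real_def abs_signed_dist_diff_le le_less_trans)

lemma continuous_on_f_avg: "continuous_on UNIV (f_avg A B x)"
  unfolding f_avg_def
  by (intro continuous_intros continuous_on_compose2[OF continuous_on_signed_dist]) auto

lemma frontier_nonempty_in_cball:
  fixes A :: "'a::euclidean_space set"
  assumes "closed A" "A \<noteq> {}" "A \<subseteq> cball 0 R"
  obtains q where "q \<in> frontier A" "norm q \<le> R"
proof -
  have "A \<noteq> UNIV" using assms(3) bounded_cball not_bounded_UNIV bounded_subset by metis
  then obtain q where "q \<in> frontier A" using assms(2) frontier_not_empty by blast
  moreover have "norm q \<le> R" using assms(1,3) calculation frontier_subset_closed by fastforce
  ultimately show ?thesis using that by blast
qed

lemma abs_signed_dist_le:
  fixes A :: "'a::euclidean_space set"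
  assumes "closed A" "A \<noteq> {}" "A \<subseteq> cball 0 R"
  shows "\<bar>signed_dist p A\<bar> \<le> norm p + R"
proof -
  obtain q where q: "q \<in> frontier A" "norm q \<le> R"
    using frontier_nonempty_in_cball[OF assms] .
  have "infdist p (frontier A) \<le> dist p q" by (rule infdist_le[OF q(1)])
  also have "\<dots> \<le> norm p + norm q" by (simp add: dist_norm norm_triangle_ineq4)
  finally show ?thesis
    using q(2) infdist_nonneg[of p "frontier A"] by (auto simp: signed_dist_def)
qed

lemma signed_dist_le_outside_cball:
  fixes A :: "'a::euclidean_space set"
  assumes "closed A" "A \<noteq> {}" "A \<subseteq> cball 0 R" "R < norm p"
  shows "signed_dist p A \<le> R - norm p"
proof -
  have "p \<notin> A" using assms(3,4) by auto
  obtain q where q: "q \<in> frontier A" "infdist p (frontier A) = dist p q"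
    using frontier_nonempty_in_cball[OF assms(1-3)] infdist_attains_inf[OF frontier_closed]
    by (metis empty_iff)
  have "norm q \<le> R" using assms(1,3) q(1) frontier_subset_closed by fastforce
  moreover have "norm p - norm q \<le> dist p q" by (simp add: dist_norm norm_triangle_ineq2)
  ultimately show ?thesis using q \<open>p \<notin> A\<close> by (simp add: signed_dist_def)
qed

lemma signed_dist_along_nearest_point:
  fixes A :: "'a::euclidean_space set"
  assumes "frontier A \<noteq> {}" "p \<notin> frontier A"
  obtains u d where "d > 0" "norm u = 1"
    "\<And>t. 0 \<le> t \<Longrightarrow> t < d \<Longrightarrow> \<bar>signed_dist (p + t *\<^sub>R u) A - signed_dist p A\<bar> = t"
proof -
  obtain q where q: "q \<in> frontier A" "infdist p (frontier A) = dist p q"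
    using infdist_attains_inf[OF frontier_closed assms(1)] by blast
  define d where "d = dist p q"
  define u where "u = (1 / d) *\<^sub>R (q - p)"
  have "d > 0" using q assms(2) unfolding d_def by (metis dist_pos_lt)
  have "norm u = 1"
    using \<open>d > 0\<close> by (simp add: u_def d_def dist_norm norm_minus_commute)
  moreover have "\<bar>signed_dist (p + t *\<^sub>R u) A - signed_dist p A\<bar> = t"
    if t: "0 \<le> t" "t < d" for t
  proof -
    define y where "y = p + t *\<^sub>R u"
    have dpy: "dist p y = t"
      using t \<open>norm u = 1\<close> by (simp add: y_def dist_norm)
    have "y - q = (1 - t/d) *\<^sub>R (p - q)"
      using \<open>d > 0\<close> by (simp add: y_def u_def algebra_simps)
    then have "dist y q = (1 - t/d) * d"
      using t \<open>d > 0\<close> by (simp add: dist_norm d_def dist_commute)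
    also have "\<dots> = d - t" using \<open>d > 0\<close> by (simp add: field_simps)
    finally have "dist y q = d - t" .
    then have "infdist y (frontier A) \<le> d - t" using infdist_le[OF q(1), of y] by simp
    moreover have "infdist p (frontier A) \<le> infdist y (frontier A) + dist p y"
      by (rule infdist_triangle)
    ultimately have iy: "infdist y (frontier A) = d - t" using q(2) dpy d_def by simp
    have "closed_segment p y \<inter> frontier A = {}"
    proof (rule ccontr)
      assume "closed_segment p y \<inter> frontier A \<noteq> {}"
      then obtain w where w: "w \<in> closed_segment p y" "w \<in> frontier A" by blast
      have "dist p w \<le> dist p y" using w(1) by (metis dist_commute dist_in_closed_segment)
      moreover have "dist p q \<le> dist p w" using infdist_le[OF w(2), of p] q(2) by simp
      ultimately show False using dpy t d_def by simp
    qed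
    then have "p \<in> A \<longleftrightarrow> y \<in> A"
      using connected_Int_frontier[of "closed_segment p y" A] by auto
    then show ?thesis
      using iy q(2) d_def t by (auto simp: signed_dist_def y_def)
  qed
  ultimately show ?thesis using that \<open>d > 0\<close> by blast
qed

section \<open>Porous sets and zero sets of signed distance combinations\<close>

definition porous_at :: "real \<Rightarrow> 'a::metric_space set \<Rightarrow> 'a \<Rightarrow> bool" where
  "porous_at \<kappa> S x \<longleftrightarrow> (\<exists>\<rho>>0. \<forall>r. 0 < r \<and> r < \<rho> \<longrightarrow>
     (\<exists>y. ball y (\<kappa> * r) \<subseteq> ball x r \<and> ball y (\<kappa> * r) \<inter> S = {}))"

lemma porous_at_subset: "porous_at \<kappa> S x \<Longrightarrow> T \<subseteq> S \<Longrightarrow> porous_at \<kappa> T x"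
  unfolding porous_at_def by (meson disjoint_iff subsetD)

lemma measure_ball_scaled:
  fixes x y :: "'a::euclidean_space"
  assumes "0 \<le> r" "0 \<le> k"
  shows "measure lebesgue (ball y (k * r)) = k ^ DIM('a) * measure lebesgue (ball x r)"
  using content_ball_conv_unit_ball[of "k*r" y] content_ball_conv_unit_ball[of r x] assms
  by (simp add: power_mult_distrib)

lemma measure_UN_disjoint_balls_le_holes:
  fixes c y :: "'i \<Rightarrow> 'a::euclidean_space"
  assumes "finite I" "0 < \<kappa>" "V \<in> lmeasurable"
    and pos: "\<And>i. i \<in> I \<Longrightarrow> 0 < r i"
    and hole: "\<And>i. i \<in> I \<Longrightarrow> ball (y i) (\<kappa> * r i) \<subseteq> ball (c i) (r i) \<inter> V"
    and disj: "pairwise (\<lambda>i j. disjnt (ball (c i) (r i)) (ball (c j) (r j))) I"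
  shows "\<kappa> ^ DIM('a) * measure lebesgue (\<Union>i\<in>I. ball (c i) (r i)) \<le> measure lebesgue V"
proof -
  let ?\<mu> = "measure lebesgue"
  have disj_holes: "pairwise (\<lambda>i j. disjnt (ball (y i) (\<kappa> * r i)) (ball (y j) (\<kappa> * r j))) I"
    unfolding pairwise_def disjnt_def
  proof (intro ballI impI)
    fix i j assume "i \<in> I" "j \<in> I" "i \<noteq> j"
    then show "ball (y i) (\<kappa> * r i) \<inter> ball (y j) (\<kappa> * r j) = {}"
      using disj hole[of i] hole[of j] unfolding pairwise_def disjnt_def by blast
  qed
  have "\<kappa> ^ DIM('a) * ?\<mu> (\<Union>i\<in>I. ball (c i) (r i)) = \<kappa> ^ DIM('a) * (\<Sum>i\<in>I. ?\<mu> (ball (c i) (r i)))"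
    using measure_UNION'[OF assms(1) _ disj] by simp
  also have "\<dots> = (\<Sum>i\<in>I. ?\<mu> (ball (y i) (\<kappa> * r i)))"
    unfolding sum_distrib_left
    by (intro sum.cong refl measure_ball_scaled[symmetric]) (use assms(2) pos in \<open>auto intro: less_imp_le\<close>)
  also have "\<dots> = ?\<mu> (\<Union>i\<in>I. ball (y i) (\<kappa> * r i))"
    using measure_UNION'[OF assms(1) _ disj_holes] by simp
  also have "\<dots> \<le> ?\<mu> V"
    by (rule measure_mono_fmeasurable) (use hole assms(1,3) in \<open>auto intro!: sets.finite_UN\<close>)
  finally show ?thesis .
qed

lemma porous_Vitali_cover:
  fixes S U :: "'a::euclidean_space set"
  assumes "open U" "S \<subseteq> U" and porous: "\<And>x. x \<in> S \<Longrightarrow> porous_at \<kappa> S x"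
  obtains C :: "('a \<times> real) set" and Y where "countable C"
    "pairwise (\<lambda>i j. disjnt (ball (fst i) (snd i)) (ball (fst j) (snd j))) C"
    "negligible (S - (\<Union>i\<in>C. ball (fst i) (snd i)))"
    "\<And>i. i \<in> C \<Longrightarrow> 0 < snd i"
    "\<And>i. i \<in> C \<Longrightarrow> ball (Y i) (\<kappa> * snd i) \<subseteq> ball (fst i) (snd i) \<inter> (U - S)"
proof -
  define K where "K = {(x, r). x \<in> S \<and> 0 < r \<and>
    (\<exists>y. ball y (\<kappa> * r) \<subseteq> ball x r \<inter> (U - S))}"
  obtain C where C: "countable C" "C \<subseteq> K"
    "pairwise (\<lambda>i j. disjnt (ball (fst i) (snd i)) (ball (fst j) (snd j))) C"
    "negligible (S - (\<Union>i\<in>C. ball (fst i) (snd i)))"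
  proof (rule Vitali_covering_theorem_balls[of S K fst snd])
    fix x and d :: real
    assume "x \<in> S" "d > 0"
    obtain e where "e > 0" "ball x e \<subseteq> U"
      using assms(1,2) \<open>x \<in> S\<close> by (meson open_contains_ball subsetD)
    obtain \<rho> where "\<rho> > 0" and \<rho>: "\<And>r. 0 < r \<Longrightarrow> r < \<rho> \<Longrightarrow>
        \<exists>y. ball y (\<kappa> * r) \<subseteq> ball x r \<and> ball y (\<kappa> * r) \<inter> S = {}"
      using porous[OF \<open>x \<in> S\<close>] unfolding porous_at_def by blast
    define r where "r = min (min \<rho> d) e / 2"
    have r: "0 < r" "r < \<rho>" "r < d" "r \<le> e"
      using \<open>\<rho> > 0\<close> \<open>e > 0\<close> \<open>d > 0\<close> unfolding r_def by auto
    have "ball x r \<subseteq> U" using r(4) \<open>ball x e \<subseteq> U\<close> by (meson order_trans subset_ball)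
    then have "(x, r) \<in> K" using \<rho>[OF r(1,2)] r(1) \<open>x \<in> S\<close> unfolding K_def by auto
    then show "\<exists>i. i \<in> K \<and> x \<in> ball (fst i) (snd i) \<and> snd i < d"
      using r by (intro exI[of _ "(x, r)"]) auto
  qed
  have "\<forall>i\<in>C. \<exists>y. ball y (\<kappa> * snd i) \<subseteq> ball (fst i) (snd i) \<inter> (U - S)"
    using \<open>C \<subseteq> K\<close> unfolding K_def by auto
  then obtain Y where "\<And>i. i \<in> C \<Longrightarrow> ball (Y i) (\<kappa> * snd i) \<subseteq> ball (fst i) (snd i) \<inter> (U - S)"
    by metis
  moreover have "\<And>i. i \<in> C \<Longrightarrow> 0 < snd i" using \<open>C \<subseteq> K\<close> unfolding K_def by auto
  ultimately show ?thesis using that C(1,3,4) by blast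
qed

text \<open>With \<open>U \<supseteq> S\<close> open, the holes of a Vitali cover of \<open>S\<close> lie in \<open>U - S\<close>, so
  \<open>\<mu> S \<le> \<mu> (U - S) / \<kappa>\<^sup>n\<close>, which can be made arbitrarily small.\<close>
lemma negligible_if_porous:
  fixes S :: "'a::euclidean_space set"
  assumes S: "S \<in> lmeasurable" and "0 < \<kappa>" and porous: "\<And>x. x \<in> S \<Longrightarrow> porous_at \<kappa> S x"
  shows "negligible S"
proof (rule ccontr)
  assume "\<not> negligible S"
  let ?\<mu> = "measure lebesgue"
  define \<theta> where "\<theta> = \<kappa> ^ DIM('a)"
  have "\<theta> > 0" using \<open>0 < \<kappa>\<close> unfolding \<theta>_def by simp
  have "?\<mu> S > 0"
    using \<open>\<not> negligible S\<close> negligible_iff_measure0[OF S] measure_nonneg[of lebesgue S] by linarith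
  define \<delta> where "\<delta> = \<theta> * ?\<mu> S / 2"
  have "\<delta> > 0" using \<open>\<theta> > 0\<close> \<open>?\<mu> S > 0\<close> unfolding \<delta>_def by simp
  obtain U where U: "open U" "S \<subseteq> U" "U - S \<in> lmeasurable" "emeasure lebesgue (U - S) < ennreal \<delta>"
    using sets_lebesgue_outer_open[OF fmeasurableD[OF S] \<open>\<delta> > 0\<close>] by blast
  have "?\<mu> (U - S) < \<delta>"
    using U(4) emeasure_eq_measure2[OF U(3)] by (simp add: ennreal_less_iff)
  obtain C :: "('a \<times> real) set" and Y where "countable C"
    and disj: "pairwise (\<lambda>i j. disjnt (ball (fst i) (snd i)) (ball (fst j) (snd j))) C"
    and cover: "negligible (S - (\<Union>i\<in>C. ball (fst i) (snd i)))"
    and pos: "\<And>i. i \<in> C \<Longrightarrow> 0 < snd i"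
    and holes: "\<And>i. i \<in> C \<Longrightarrow> ball (Y i) (\<kappa> * snd i) \<subseteq> ball (fst i) (snd i) \<inter> (U - S)"
    using porous_Vitali_cover[OF U(1,2) porous] by blast
  have finite_bound: "?\<mu> (\<Union>i\<in>I. ball (fst i) (snd i)) \<le> \<delta> / \<theta>" if "I \<subseteq> C" "finite I" for I
  proof -
    have "\<theta> * ?\<mu> (\<Union>i\<in>I. ball (fst i) (snd i)) \<le> ?\<mu> (U - S)"
      unfolding \<theta>_def
      using measure_UN_disjoint_balls_le_holes[OF \<open>finite I\<close> \<open>0 < \<kappa>\<close> U(3), of snd Y fst]
        pairwise_subset[OF disj \<open>I \<subseteq> C\<close>] pos holes \<open>I \<subseteq> C\<close> by blast
    then show ?thesis using \<open>?\<mu> (U - S) < \<delta>\<close> \<open>\<theta> > 0\<close> by (simp add: field_simps)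
  qed
  let ?W = "\<Union>i\<in>C. ball (fst i) (snd i)"
  have W: "?W \<in> lmeasurable" "?\<mu> ?W \<le> \<delta> / \<theta>"
    using fmeasurable_UN_bound[OF \<open>countable C\<close> _ finite_bound]
      measure_UN_bound[OF \<open>countable C\<close> _ finite_bound] by auto
  have "?\<mu> S \<le> ?\<mu> ((S - ?W) \<union> ?W)"
    by (rule measure_mono_fmeasurable) (use cover W S in \<open>auto intro: negligible_imp_measurable\<close>)
  also have "\<dots> \<le> ?\<mu> (S - ?W) + ?\<mu> ?W"
    by (rule measure_Un_le) (use cover W in \<open>auto dest: fmeasurableD negligible_imp_measurable\<close>)
  also have "\<dots> \<le> \<delta> / \<theta>" using cover W by (simp add: negligible_imp_measure0)
  also have "\<dots> = ?\<mu> S / 2" using \<open>\<theta> > 0\<close> unfolding \<delta>_def by simp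
  finally show False using \<open>?\<mu> S > 0\<close> by simp
qed

lemma abs_lin_comb_signed_dist_diff_le:
  "\<bar>(a * signed_dist y A + b * signed_dist y B) - (a * signed_dist z A + b * signed_dist z B)\<bar>
     \<le> (\<bar>a\<bar> + \<bar>b\<bar>) * dist y z"
proof -
  have "\<bar>(a * signed_dist y A + b * signed_dist y B) - (a * signed_dist z A + b * signed_dist z B)\<bar>
      = \<bar>a * (signed_dist y A - signed_dist z A) + b * (signed_dist y B - signed_dist z B)\<bar>"
    by (simp add: algebra_simps)
  also have "\<dots> \<le> \<bar>a\<bar> * \<bar>signed_dist y A - signed_dist z A\<bar> + \<bar>b\<bar> * \<bar>signed_dist y B - signed_dist z B\<bar>"
    by (metis abs_mult abs_triangle_ineq)
  also have "\<dots> \<le> \<bar>a\<bar> * dist y z + \<bar>b\<bar> * dist y z"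
    by (intro add_mono mult_left_mono abs_signed_dist_diff_le) auto
  finally show ?thesis by (simp add: algebra_simps)
qed

text \<open>Walking a distance \<open>t\<close> from \<open>p\<close> towards the boundary of \<open>A\<close> moves the \<open>A\<close>-term by
  exactly \<open>|a| t\<close> and the \<open>B\<close>-term by at most \<open>|b| t\<close>, so the combination is at least
  \<open>(|a| - |b|) t\<close> away from zero there, and by Lipschitz continuity on a whole ball around.\<close>
lemma porous_at_zero_set_signed_dist_comb:
  fixes A B :: "'a::euclidean_space set"
  assumes "frontier A \<noteq> {}" "\<bar>b\<bar> < \<bar>a\<bar>" "p \<notin> frontier A"
    and zero: "a * signed_dist p A + b * signed_dist p B = 0"
  shows "porous_at ((\<bar>a\<bar> - \<bar>b\<bar>) / (2 * (\<bar>a\<bar> + \<bar>b\<bar>)))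
           {z. a * signed_dist z A + b * signed_dist z B = 0} p"
proof -
  obtain u d where "d > 0" "norm u = 1"
    and descent: "\<And>t. 0 \<le> t \<Longrightarrow> t < d \<Longrightarrow> \<bar>signed_dist (p + t *\<^sub>R u) A - signed_dist p A\<bar> = t"
    using signed_dist_along_nearest_point[OF assms(1,3)] by blast
  define \<kappa> where "\<kappa> = (\<bar>a\<bar> - \<bar>b\<bar>) / (2 * (\<bar>a\<bar> + \<bar>b\<bar>))"
  define \<phi> where "\<phi> z = a * signed_dist z A + b * signed_dist z B" for z
  have "\<bar>a\<bar> + \<bar>b\<bar> > 0" using assms(2) by linarith
  have \<kappa>_le: "\<kappa> \<le> 1/2" using assms(2) \<open>\<bar>a\<bar> + \<bar>b\<bar> > 0\<close> unfolding \<kappa>_def by (simp add: field_simps)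
  have "\<exists>y. ball y (\<kappa> * r) \<subseteq> ball p r \<and> ball y (\<kappa> * r) \<inter> {z. \<phi> z = 0} = {}"
    if r: "0 < r" "r < d" for r
  proof -
    define t where "t = r / 2"
    define y where "y = p + t *\<^sub>R u"
    have "dist p y = t" using r \<open>norm u = 1\<close> by (simp add: y_def t_def dist_norm)
    have sA: "\<bar>signed_dist y A - signed_dist p A\<bar> = t"
      using descent[of t] r unfolding y_def t_def by simp
    have sB: "\<bar>signed_dist y B - signed_dist p B\<bar> \<le> t"
      using abs_signed_dist_diff_le[of y B p] \<open>dist p y = t\<close> by (simp add: dist_commute)
    have "\<phi> y = a * (signed_dist y A - signed_dist p A) + b * (signed_dist y B - signed_dist p B)"
      using zero unfolding \<phi>_def by (simp add: algebra_simps)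
    moreover have "\<bar>a * (signed_dist y A - signed_dist p A)\<bar> = \<bar>a\<bar> * t"
      using sA by (simp add: abs_mult)
    moreover have "\<bar>b * (signed_dist y B - signed_dist p B)\<bar> \<le> \<bar>b\<bar> * t"
      using sB by (simp add: abs_mult mult_left_mono)
    ultimately have \<phi>_y: "\<bar>\<phi> y\<bar> \<ge> (\<bar>a\<bar> - \<bar>b\<bar>) * t"
      by (simp add: algebra_simps)
    have "(\<bar>a\<bar> + \<bar>b\<bar>) * \<kappa> = (\<bar>a\<bar> - \<bar>b\<bar>) / 2"
      using \<open>\<bar>a\<bar> + \<bar>b\<bar> > 0\<close> unfolding \<kappa>_def by (simp add: divide_simps)
    then have radius: "(\<bar>a\<bar> + \<bar>b\<bar>) * (\<kappa> * r) = (\<bar>a\<bar> - \<bar>b\<bar>) * t"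
      unfolding t_def mult.assoc[symmetric] by simp
    have "\<phi> z \<noteq> 0 \<and> z \<in> ball p r" if "z \<in> ball y (\<kappa> * r)" for z
    proof
      have "dist y z < \<kappa> * r" using that by simp
      then have "(\<bar>a\<bar> + \<bar>b\<bar>) * dist y z < (\<bar>a\<bar> - \<bar>b\<bar>) * t"
        using radius \<open>\<bar>a\<bar> + \<bar>b\<bar> > 0\<close> by (metis mult_strict_left_mono)
      moreover have "\<bar>\<phi> y - \<phi> z\<bar> \<le> (\<bar>a\<bar> + \<bar>b\<bar>) * dist y z"
        unfolding \<phi>_def by (rule abs_lin_comb_signed_dist_diff_le)
      ultimately show "\<phi> z \<noteq> 0" using \<phi>_y by linarith
      have "dist p z \<le> dist p y + dist y z" by (rule dist_triangle)
      also have "\<dots> < t + \<kappa> * r" using \<open>dist p y = t\<close> \<open>dist y z < \<kappa> * r\<close> by simp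
      also have "\<dots> \<le> r" using \<kappa>_le r unfolding t_def by (simp add: field_simps)
      finally show "z \<in> ball p r" by simp
    qed
    then show ?thesis by blast
  qed
  then show ?thesis
    using \<open>d > 0\<close> unfolding porous_at_def \<kappa>_def \<phi>_def by blast
qed

lemma negligible_zero_set_signed_dist_comb:
  fixes A B :: "'a::euclidean_space set"
  assumes "frontier A \<noteq> {}" "negligible (frontier A)" "\<bar>b\<bar> < \<bar>a\<bar>"
    and bounded: "bounded {p. a * signed_dist p A + b * signed_dist p B = 0}"
  shows "negligible {p. a * signed_dist p A + b * signed_dist p B = 0}"
    (is "negligible ?Z")
proof -
  have "closed ?Z"
    by (intro closed_Collect_eq continuous_intros
        continuous_on_compose2[OF continuous_on_signed_dist]) auto
  then have "?Z - frontier A \<in> lmeasurable"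
    using bounded assms(2) by (intro fmeasurable.Diff lmeasurable_compact negligible_imp_measurable)
      (auto simp: compact_eq_bounded_closed)
  moreover have "(\<bar>a\<bar> - \<bar>b\<bar>) / (2 * (\<bar>a\<bar> + \<bar>b\<bar>)) > 0"
    using assms(3) by (simp add: divide_pos_pos)
  ultimately have "negligible (?Z - frontier A)"
  proof (rule negligible_if_porous)
    fix x assume "x \<in> ?Z - frontier A"
    then show "porous_at ((\<bar>a\<bar> - \<bar>b\<bar>) / (2 * (\<bar>a\<bar> + \<bar>b\<bar>))) (?Z - frontier A) x"
      by (intro porous_at_subset[OF porous_at_zero_set_signed_dist_comb[OF assms(1,3)]]) auto
  qed
  then show ?thesis
    using assms(2) by (metis Diff_partition Un_Diff_cancel negligible_Un negligible_subset sup_ge2)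
qed

section \<open>Continuity of the measure of superlevel sets\<close>

lemma measure_band_around_zero_set_tendsto_0:
  fixes g :: "'a::euclidean_space \<Rightarrow> real"
  assumes "compact K" "continuous_on UNIV g" "negligible {p. g p = 0}"
  shows "(\<lambda>n. measure lebesgue (K \<inter> {p. \<bar>g p\<bar> \<le> 1 / Suc n})) \<longlonglongrightarrow> 0"
proof -
  define T where "T n = K \<inter> {p. \<bar>g p\<bar> \<le> 1 / Suc n}" for n
  have T_compact: "compact (T n)" for n
    unfolding T_def
    by (intro compact_Int_closed assms(1) closed_Collect_le continuous_intros assms(2)) auto
  have "decseq T"
  proof (rule decseq_SucI)
    fix n
    have "1 / real (Suc (Suc n)) \<le> 1 / real (Suc n)"
      by (rule divide_left_mono) auto
    then show "T (Suc n) \<subseteq> T n" unfolding T_def by (auto simp del: of_nat_Suc)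
  qed
  have "(\<Inter>n. T n) \<subseteq> {p. g p = 0}"
  proof
    fix p assume "p \<in> (\<Inter>n. T n)"
    then have "\<bar>g p\<bar> \<le> 1 / Suc n" for n unfolding T_def by auto
    then have "\<bar>g p\<bar> \<le> 0"
      by (metis nat_approx_posE not_le of_nat_Suc le_less_trans)
    then show "p \<in> {p. g p = 0}" by simp
  qed
  then have "measure lebesgue (\<Inter>n. T n) = 0"
    using negligible_subset[OF assms(3)] negligible_imp_measure0 by blast
  moreover have "(\<lambda>n. measure lebesgue (T n)) \<longlonglongrightarrow> measure lebesgue (\<Inter>n. T n)"
    using T_compact \<open>decseq T\<close>
    by (intro Lim_measure_decseq) (auto simp: fmeasurableD lmeasurable_compact emeasure_eq_measure2)
  ultimately show ?thesis unfolding T_def by simp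
qed

lemma isCont_measure_superlevel_set:
  fixes f :: "real \<Rightarrow> 'a::euclidean_space \<Rightarrow> real"
  assumes "compact K" and cont: "\<And>x. continuous_on UNIV (f x)"
    and sub: "\<And>x. \<bar>x - x0\<bar> \<le> 1 \<Longrightarrow> {p. 0 \<le> f x p} \<subseteq> K"
    and lip: "\<And>x p. p \<in> K \<Longrightarrow> \<bar>f x p - f x0 p\<bar> \<le> C * \<bar>x - x0\<bar>"
    and "negligible {p. f x0 p = 0}"
  shows "isCont (\<lambda>x. measure lebesgue {p. 0 \<le> f x p}) x0"
  unfolding continuous_at_eps_delta
proof (intro allI impI)
  let ?\<mu> = "measure lebesgue"
  let ?S = "\<lambda>x. {p. 0 \<le> f x p}"
  let ?T = "\<lambda>n. K \<inter> {p. \<bar>f x0 p\<bar> \<le> 1 / Suc n}"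
  fix e :: real assume "e > 0"
  obtain N where N: "?\<mu> (?T N) < e"
    using measure_band_around_zero_set_tendsto_0[OF \<open>compact K\<close> cont \<open>negligible _\<close>] \<open>e > 0\<close>
    unfolding lim_sequentially by (metis dist_real_def diff_zero abs_of_nonneg measure_nonneg order_refl)
  define d where "d = min 1 (1 / (Suc N * (\<bar>C\<bar> + 1)))"
  have "d > 0" unfolding d_def by simp
  have S_lmeasurable: "?S x \<in> lmeasurable" if "\<bar>x - x0\<bar> \<le> 1" for x
  proof (rule lmeasurable_compact)
    have "closed (?S x)" by (intro closed_Collect_le continuous_intros cont)
    then show "compact (?S x)"
      using sub[OF that] \<open>compact K\<close> by (metis compact_Int_closed inf.absorb2)
  qed
  have T_lmeasurable: "?T N \<in> lmeasurable"
    by (intro lmeasurable_compact compact_Int_closed \<open>compact K\<close> closed_Collect_le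
        continuous_intros cont)
  show "\<exists>d>0. \<forall>x. dist x x0 < d \<longrightarrow> dist (?\<mu> (?S x)) (?\<mu> (?S x0)) < e"
  proof (intro exI conjI allI impI)
    fix x assume "dist x x0 < d"
    then have "\<bar>x - x0\<bar> \<le> 1" "\<bar>x - x0\<bar> \<le> 1 / (Suc N * (\<bar>C\<bar> + 1))"
      unfolding d_def dist_real_def by auto
    then have "C * \<bar>x - x0\<bar> \<le> (\<bar>C\<bar> + 1) * (1 / (Suc N * (\<bar>C\<bar> + 1)))"
      by (intro mult_mono) auto
    then have small: "C * \<bar>x - x0\<bar> \<le> 1 / Suc N" by simp
    have band: "p \<in> ?T N" if "p \<in> K" "(0 \<le> f x p) \<noteq> (0 \<le> f x0 p)" for p
      using lip[OF that(1), of x] small that by auto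
    have "?\<mu> (?S x - ?S x0) \<le> ?\<mu> (?T N)" "?\<mu> (?S x0 - ?S x) \<le> ?\<mu> (?T N)"
      using band sub[OF \<open>\<bar>x - x0\<bar> \<le> 1\<close>] sub[of x0] T_lmeasurable
        S_lmeasurable[OF \<open>\<bar>x - x0\<bar> \<le> 1\<close>] S_lmeasurable[of x0]
      by (auto intro!: measure_mono_fmeasurable sets.Diff fmeasurableD)
    moreover have "?\<mu> (?S x) - ?\<mu> (?S x0) \<le> ?\<mu> (?S x - ?S x0)"
      "?\<mu> (?S x0) - ?\<mu> (?S x) \<le> ?\<mu> (?S x0 - ?S x)"
      using S_lmeasurable \<open>\<bar>x - x0\<bar> \<le> 1\<close> by (auto intro!: measure_diff_le_measure_setdiff)
    ultimately show "dist (?\<mu> (?S x)) (?\<mu> (?S x0)) < e"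
      using N unfolding dist_real_def by linarith
  qed (fact \<open>d > 0\<close>)
qed

section \<open>Distance averages\<close>

lemma f_avg_diff: "f_avg A B x p - f_avg A B x0 p = (x - x0) * (signed_dist p A - signed_dist p B)"
  by (simp add: f_avg_def algebra_simps)

lemma bounded_subset_cball_0:
  fixes A B :: "'a::real_normed_vector set"
  assumes "bounded A" "bounded B"
  obtains R where "A \<subseteq> cball 0 R" "B \<subseteq> cball 0 R"
proof -
  have "bounded (A \<union> B)" using assms by simp
  then obtain r where "A \<union> B \<subseteq> ball 0 r"
    using bounded_subset_ballD by blast
  then show ?thesis using that ball_subset_cball by blast
qed

lemma dist_average_subset_cball:
  fixes A B :: "'a::euclidean_space set"
  assumes "closed A" "closed B" "A \<noteq> {}" "B \<noteq> {}" "A \<subseteq> cball 0 R" "B \<subseteq> cball 0 R"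
    and "\<bar>x\<bar> \<le> M"
  shows "dist_average A B x \<subseteq> cball 0 (R + 2 * R * M)"
proof
  fix p assume p: "p \<in> dist_average A B x"
  obtain a where "a \<in> A" using assms(3) by blast
  then have "norm a \<le> R" using assms(5) by auto
  then have "0 \<le> R" by (meson norm_ge_zero order_trans)
  show "p \<in> cball 0 (R + 2 * R * M)"
  proof (rule ccontr)
    assume "p \<notin> cball 0 (R + 2 * R * M)"
    then have far: "R + 2 * R * M < norm p" by simp
    moreover have "0 \<le> 2 * R * M" using \<open>0 \<le> R\<close> assms(7) by simp
    ultimately have "R < norm p" by linarith
    have A_up: "signed_dist p A \<le> R - norm p"
      by (rule signed_dist_le_outside_cball[OF assms(1,3,5) \<open>R < norm p\<close>])
    have B_up: "signed_dist p B \<le> R - norm p"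
      by (rule signed_dist_le_outside_cball[OF assms(2,4,6) \<open>R < norm p\<close>])
    have "\<bar>signed_dist p A - signed_dist p B\<bar> \<le> 2 * R"
      using A_up B_up abs_signed_dist_le[OF assms(1,3,5), of p] abs_signed_dist_le[OF assms(2,4,6), of p]
      by linarith
    then have "\<bar>x\<bar> * \<bar>signed_dist p A - signed_dist p B\<bar> \<le> M * (2 * R)"
      using assms(7) by (intro mult_mono) auto
    then have "x * (signed_dist p A - signed_dist p B) \<le> M * (2 * R)"
      by (metis abs_ge_self abs_mult order_trans)
    then have "f_avg A B x p < 0"
      using B_up far unfolding f_avg_def by (simp add: algebra_simps)
    then show False using p by (simp add: dist_average_def)
  qed
qed

lemma compact_dist_average:
  fixes A B :: "'a::euclidean_space set"
  assumes "closed A" "closed B" "bounded A" "bounded B" "A \<noteq> {}" "B \<noteq> {}"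
  shows "compact (dist_average A B x)"
proof -
  obtain R where "A \<subseteq> cball 0 R" "B \<subseteq> cball 0 R"
    using bounded_subset_cball_0[OF assms(3,4)] .
  then have "dist_average A B x \<subseteq> cball 0 (R + 2 * R * \<bar>x\<bar>)"
    by (intro dist_average_subset_cball assms) auto
  moreover have "closed (dist_average A B x)"
    unfolding dist_average_def by (intro closed_Collect_le continuous_intros continuous_on_f_avg)
  ultimately show ?thesis by (meson bounded_cball bounded_subset compact_eq_bounded_closed)
qed

lemma Omega_set_subset_dist_average: "Omega_set A B x \<subseteq> dist_average A B x"
  unfolding Omega_set_def dist_average_def by auto

lemma isCont_measure_dist_average:
  fixes A B :: "'a::euclidean_space set"
  assumes "closed A" "closed B" "bounded A" "bounded B" "A \<noteq> {}" "B \<noteq> {}"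
    and "negligible (Omega_set A B x0)"
  shows "isCont (\<lambda>x. measure lebesgue (dist_average A B x)) x0"
proof -
  obtain R where A: "A \<subseteq> cball 0 R" and B: "B \<subseteq> cball 0 R"
    using bounded_subset_cball_0[OF assms(3,4)] .
  define R' where "R' = R + 2 * R * (\<bar>x0\<bar> + 1)"
  have "isCont (\<lambda>x. measure lebesgue {p. 0 \<le> f_avg A B x p}) x0"
  proof (rule isCont_measure_superlevel_set[where K = "cball 0 R'" and C = "2 * (R' + R)"])
    show "{p. 0 \<le> f_avg A B x p} \<subseteq> cball 0 R'" if "\<bar>x - x0\<bar> \<le> 1" for x
      using dist_average_subset_cball[OF assms(1,2,5,6) A B, of x "\<bar>x0\<bar> + 1"] that
      unfolding R'_def dist_average_def by linarith
    show "\<bar>f_avg A B x p - f_avg A B x0 p\<bar> \<le> 2 * (R' + R) * \<bar>x - x0\<bar>"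
      if "p \<in> cball 0 R'" for x p
    proof -
      have "\<bar>signed_dist p A - signed_dist p B\<bar> \<le> 2 * (R' + R)"
        using that abs_signed_dist_le[OF assms(1,5) A, of p] abs_signed_dist_le[OF assms(2,6) B, of p]
        by simp
      then show ?thesis
        unfolding f_avg_diff abs_mult by (simp add: mult.commute mult_left_mono)
    qed
    show "negligible {p. f_avg A B x0 p = 0}"
      using assms(7) by (simp add: Omega_set_def)
  qed (auto intro: continuous_on_f_avg)
  then show ?thesis by (simp add: dist_average_def)
qed

lemma negligible_Omega_set:
  fixes A B :: "'a::euclidean_space set"
  assumes "closed A" "closed B" "bounded A" "bounded B" "A \<noteq> {}" "B \<noteq> {}"
    and "negligible (frontier A)" "negligible (frontier B)" "x \<noteq> 1/2"
  shows "negligible (Omega_set A B x)"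
proof -
  have bounded: "bounded (Omega_set A B x)"
    using compact_dist_average[OF assms(1-6)] Omega_set_subset_dist_average
    by (meson bounded_subset compact_imp_bounded)
  have "A \<noteq> UNIV" "B \<noteq> UNIV" using assms(3,4) not_bounded_UNIV by auto
  then have "frontier A \<noteq> {}" "frontier B \<noteq> {}"
    using frontier_not_empty[OF assms(5)] frontier_not_empty[OF assms(6)] by blast+
  consider "\<bar>1 - x\<bar> < \<bar>x\<bar>" | "\<bar>x\<bar> < \<bar>1 - x\<bar>"
    using assms(9) by arith
  then show ?thesis
  proof cases
    case 1
    have "Omega_set A B x = {p. x * signed_dist p A + (1 - x) * signed_dist p B = 0}"
      unfolding Omega_set_def f_avg_def ..
    then show ?thesis
      using negligible_zero_set_signed_dist_comb[OF \<open>frontier A \<noteq> {}\<close> assms(7) 1] bounded by simp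
  next
    case 2
    have "Omega_set A B x = {p. (1 - x) * signed_dist p B + x * signed_dist p A = 0}"
      unfolding Omega_set_def f_avg_def by (simp add: add.commute)
    then show ?thesis
      using negligible_zero_set_signed_dist_comb[OF \<open>frontier B \<noteq> {}\<close> assms(8) 2] bounded by simp
  qed
qed

lemma zero_measure_cond_iff_negligible:
  fixes A B :: "'a::euclidean_space set"
  assumes "closed A" "closed B" "bounded A" "bounded B" "A \<noteq> {}" "B \<noteq> {}"
  shows "zero_measure_cond A B \<longleftrightarrow> negligible (Omega_set A B (1/2))"
proof -
  have "closed (Omega_set A B (1/2))"
    unfolding Omega_set_def by (intro closed_Collect_eq continuous_intros continuous_on_f_avg)
  moreover have "bounded (Omega_set A B (1/2))"
    using compact_dist_average[OF assms] Omega_set_subset_dist_average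
    by (meson bounded_subset compact_imp_bounded)
  ultimately have "Omega_set A B (1/2) \<in> lmeasurable"
    by (simp add: lmeasurable_compact compact_eq_bounded_closed)
  then show ?thesis unfolding zero_measure_cond_def by (simp add: negligible_iff_measure0)
qed

lemma J_class_closed: "J_class A \<Longrightarrow> closed A"
  unfolding J_class_def by (metis closed_closure)

lemma J_class_bounded: "J_class A \<Longrightarrow> bounded A"
  unfolding J_class_def by blast

lemma J_class_negligible_frontier:
  fixes A :: "'a::euclidean_space set"
  assumes "J_class A"
  shows "negligible (frontier A)"
proof -
  have "compact (frontier A)"
    using J_class_bounded[OF assms] J_class_closed[OF assms]
    by (meson bounded_subset compact_eq_bounded_closed frontier_closed frontier_subset_closed)
  then show ?thesis
    using assms unfolding J_class_def by (simp add: lmeasurable_compact negligible_iff_measure0)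
qed

theorem mainTheorem5:
  fixes A B :: "'a::euclidean_space set"
  assumes "A \<noteq> {}" and "B \<noteq> {}" and "J_class A" and "J_class B"
  defines "h \<equiv> (\<lambda>x. measure lebesgue (dist_average A B x))"
  shows "(zero_measure_cond A B \<longrightarrow> continuous_on UNIV h)
       \<and> (\<not> zero_measure_cond A B \<longrightarrow> (\<forall>x. x \<noteq> 1/2 \<longrightarrow> isCont h x))"
proof -
  note A = J_class_closed[OF assms(3)] J_class_bounded[OF assms(3)]
  note B = J_class_closed[OF assms(4)] J_class_bounded[OF assms(4)]
  have cont: "isCont h x" if "negligible (Omega_set A B x)" for x
    unfolding h_def by (rule isCont_measure_dist_average[OF A(1) B(1) A(2) B(2) assms(1,2) that])
  have "negligible (Omega_set A B x)" if "x \<noteq> 1/2" for x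
    using negligible_Omega_set[OF A(1) B(1) A(2) B(2) assms(1,2)
        J_class_negligible_frontier[OF assms(3)] J_class_negligible_frontier[OF assms(4)] that] .
  moreover have "zero_measure_cond A B \<longleftrightarrow> negligible (Omega_set A B (1/2))"
    using zero_measure_cond_iff_negligible[OF A(1) B(1) A(2) B(2) assms(1,2)] .
  ultimately show ?thesis
    using cont by (metis continuous_at_imp_continuous_on)
qed

end
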